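(* Let $G$ be a snark, let $uwv$ be a path of length two in $G$, let $N=\operatorname{Neg}(G;u,v)$, let $x\in\{u,v\}$ and $y\in V(N)$. Assume that for every edge $e$ incident with $x$ in $G$ there is an edge $f$ incident with $y$ in $G$ such that $\{e,f\}$ is an essential pair of edges of $G$. Then for any two dangling edges $e',f'$ of the $6$-pole $G-\{x,y\}$ that were formerly incident with $x$, there exists a colouring $\varphi$ of $G-\{x,y\}$ with $\varphi(e')=\varphi(f')$.
   Context: A colouring of a graph or multipole is an assignment of three colours to its edges such that edge ends meeting at any vertex have distinct colours. A snark is a connected cubic graph (loops and parallel edges allowed) with no colouring. Negator: for a snark $G$ and a path $uwv$ in $G$, $\operatorname{Neg}(G;u,v)$ is the multipole obtained by deleting $u,w,v$ from $G$ (edges to remaining vertices become dangling edges); $V(N)$ denotes its vertex set. $G-\{x,y\}$ denotes the multipole obtained by deleting the vertices $x,y$, where edges joining them to other vertices become dangling edges and an edge $xy$, if present, is kept as an isolated edge (so it is a $6$-pole). A pair $\{e,f\}$ of edges of a snark $G$ is essential if the graph $G-\{e,f\}$ (delete the two edges, keep all vertices) is colourable and, for every $2$-valent vertex $z$ of $G-\{e,f\}$, the graph obtained from $G-\{e,f\}$ by suppressing $z$ (replacing the two edges at $z$ by a single edge) is colourable. *)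

theory Defs
  imports Main
begin

text \<open>Multipoles (graphs with possible dangling / isolated edges), loops and
parallel edges allowed.  Every edge e has two ends (e,True) and (e,False);
an end is either attached to a vertex (Some v) or free (None).\<close>

record ('v,'e) mpole =
  verts :: "'v set"
  edges :: "'e set"
  ends  :: "'e \<times> bool \<Rightarrow> 'v option"

definition ends_at :: "('v,'e) mpole \<Rightarrow> 'v \<Rightarrow> ('e \<times> bool) set" where
  "ends_at M z = {h. fst h \<in> edges M \<and> ends M h = Some z}"

definition wf_mpole :: "('v,'e) mpole \<Rightarrow> bool" where
  "wf_mpole M \<longleftrightarrow> finite (verts M) \<and> finite (edges M) \<and>
     (\<forall>e\<in>edges M. \<forall>b. ends M (e,b) = None \<or> the (ends M (e,b)) \<in> verts M)"

text \<open>A colouring: three colours 0,1,2 on the edges; edge ends meeting at a vertex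
get distinct colours (so a loop is never properly coloured).\<close>
definition is_colouring :: "('v,'e) mpole \<Rightarrow> ('e \<Rightarrow> nat) \<Rightarrow> bool" where
  "is_colouring M \<phi> \<longleftrightarrow> (\<forall>e\<in>edges M. \<phi> e < 3) \<and>
     (\<forall>z\<in>verts M. inj_on (\<lambda>h. \<phi> (fst h)) (ends_at M z))"

definition colourable :: "('v,'e) mpole \<Rightarrow> bool" where
  "colourable M \<longleftrightarrow> (\<exists>\<phi>. is_colouring M \<phi>)"

definition incident :: "('v,'e) mpole \<Rightarrow> 'e \<Rightarrow> 'v \<Rightarrow> bool" where
  "incident M e z \<longleftrightarrow> e \<in> edges M \<and> (\<exists>b. ends M (e,b) = Some z)"

definition adjacent :: "('v,'e) mpole \<Rightarrow> 'v \<Rightarrow> 'v \<Rightarrow> bool" where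
  "adjacent M a c \<longleftrightarrow> (\<exists>e\<in>edges M. \<exists>b. ends M (e,b) = Some a \<and> ends M (e,\<not>b) = Some c)"

definition cubic_graph :: "('v,'e) mpole \<Rightarrow> bool" where
  "cubic_graph G \<longleftrightarrow> wf_mpole G \<and>
     (\<forall>e\<in>edges G. \<forall>b. ends G (e,b) \<noteq> None) \<and>
     (\<forall>z\<in>verts G. card (ends_at G z) = 3)"

definition connected_graph :: "('v,'e) mpole \<Rightarrow> bool" where
  "connected_graph G \<longleftrightarrow> verts G \<noteq> {} \<and>
     (\<forall>a\<in>verts G. \<forall>c\<in>verts G. (adjacent G)\<^sup>*\<^sup>* a c)"

definition snark :: "('v,'e) mpole \<Rightarrow> bool" where
  "snark G \<longleftrightarrow> cubic_graph G \<and> connected_graph G \<and> \<not> colourable G"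

text \<open>Deleting a set of vertices: ends at deleted vertices become free; all edges
are kept (an edge joining two deleted vertices becomes an isolated edge).\<close>
definition del_verts :: "('v,'e) mpole \<Rightarrow> 'v set \<Rightarrow> ('v,'e) mpole" where
  "del_verts M S = \<lparr> verts = verts M - S, edges = edges M,
     ends = (\<lambda>h. case ends M h of None \<Rightarrow> None
                   | Some z \<Rightarrow> (if z \<in> S then None else Some z)) \<rparr>"

text \<open>Negator Neg(G;u,v) for the path u w v: delete u, w, v; edges to remaining
vertices become dangling, edges among u, w, v disappear.\<close>
definition negator :: "('v,'e) mpole \<Rightarrow> 'v \<Rightarrow> 'v \<Rightarrow> 'v \<Rightarrow> ('v,'e) mpole" where
  "negator G u w v =
     (let D = del_verts G {u,w,v} in
      D \<lparr> edges := {e \<in> edges G. \<exists>b. ends D (e,b) \<noteq> None} \<rparr>)"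

definition dangling_edge :: "('v,'e) mpole \<Rightarrow> 'e \<Rightarrow> bool" where
  "dangling_edge M e \<longleftrightarrow> e \<in> edges M \<and>
     ((ends M (e,True) = None) \<noteq> (ends M (e,False) = None))"

definition del_edges :: "('v,'e) mpole \<Rightarrow> 'e set \<Rightarrow> ('v,'e) mpole" where
  "del_edges M F = M \<lparr> edges := edges M - F \<rparr>"

text \<open>Suppressing a 2-valent vertex z: the two edge ends h1, h2 at z belong to edges
g1 = fst h1, g2 = fst h2.  If g1 \<noteq> g2, g1 and g2 are replaced by one edge
(realised as g1 whose end h1 is re-attached where the other end of g2 lies, and g2
removed).  If g1 = g2 (a loop at z) the vertex and the loop are removed (the
resulting vertexless circle is trivially colourable, so nothing is lost).\<close>
definition suppress :: "('v,'e) mpole \<Rightarrow> 'v \<Rightarrow> ('v,'e) mpole" where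
  "suppress M z =
     (let (h1, h2) = (SOME p. fst p \<noteq> snd p \<and> ends_at M z = {fst p, snd p})
      in if fst h1 = fst h2 then
           \<lparr> verts = verts M - {z}, edges = edges M - {fst h1}, ends = ends M \<rparr>
         else
           \<lparr> verts = verts M - {z}, edges = edges M - {fst h2},
             ends = (ends M)(h1 := ends M (fst h2, \<not> snd h2)) \<rparr>)"

definition essential_pair :: "('v,'e) mpole \<Rightarrow> 'e \<Rightarrow> 'e \<Rightarrow> bool" where
  "essential_pair G e f \<longleftrightarrow> e \<in> edges G \<and> f \<in> edges G \<and> e \<noteq> f \<and>
     colourable (del_edges G {e,f}) \<and>
     (\<forall>z\<in>verts G. card (ends_at (del_edges G {e,f}) z) = 2 \<longrightarrow>
        colourable (suppress (del_edges G {e,f}) z))"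

end

theory Submission
  imports Defs
begin

text \<open>
  Let g be the third edge at x.  By hypothesis {g, f} is an essential pair for some edge f
  at y.  In G - {g, f} the vertex x is 2-valent with edges e' and f', so suppressing x gives a
  colourable graph, and undoing the suppression colours G - {g, f} - x with e' and f' of the
  same colour.  Deleting y keeps this a colouring, and g and f, now dangling, can be put back:
  a dangling edge meets at most one vertex, where at most two colours are already used.
\<close>

lemma card_3_obtain_third:
  assumes "card A = 3" "a \<in> A" "b \<in> A" "a \<noteq> b"
  obtains c where "A = {a, b, c}" "c \<noteq> a" "c \<noteq> b"
proof -
  have "finite A" using assms(1) by (metis card.infinite zero_neq_numeral)
  have "card (A - {a, b}) = 1" using assms by (simp add: card_Diff_subset \<open>finite A\<close>)
  then obtain c where c: "A - {a, b} = {c}" by (auto simp: card_1_singleton_iff)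
  then have "A = {a, b, c}" using assms(2,3) by auto
  moreover have "c \<noteq> a" "c \<noteq> b" using c by auto
  ultimately show thesis using that by blast
qed

lemma ex_less_three_notin:
  assumes "finite C" "card C < 3"
  shows "\<exists>c<3. c \<notin> (C :: nat set)"
proof (rule ccontr)
  assume "\<not> ?thesis"
  then have "{0..<3} \<subseteq> C" by auto
  then have "card {0..<3::nat} \<le> card C" by (rule card_mono[OF assms(1)])
  then show False using assms(2) by simp
qed

lemma ends_at_del_edges: "ends_at (del_edges M F) z = {h \<in> ends_at M z. fst h \<notin> F}"
  by (auto simp: ends_at_def del_edges_def)

lemma ends_at_del_verts: "z \<notin> S \<Longrightarrow> ends_at (del_verts M S) z = ends_at M z"
  by (auto simp: ends_at_def del_verts_def split: option.splits)

lemma del_verts_del_verts: "del_verts (del_verts M S) T = del_verts M (S \<union> T)"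
  by (auto simp: del_verts_def fun_eq_iff split: option.split)

lemma del_verts_del_edges: "del_verts (del_edges M F) S = del_edges (del_verts M S) F"
  by (simp add: del_verts_def del_edges_def)

lemma del_edges_del_edges_singleton: "del_edges (del_edges M F) {e} = del_edges M (insert e F)"
  by (simp add: del_edges_def Diff_insert[of "edges M" e F])

lemma is_colouring_del_verts:
  assumes "is_colouring M \<phi>"
  shows "is_colouring (del_verts M S) \<phi>"
proof -
  have "verts (del_verts M S) = verts M - S" "edges (del_verts M S) = edges M"
    by (simp_all add: del_verts_def)
  then show ?thesis using assms by (simp add: is_colouring_def ends_at_del_verts)
qed

definition subcubic :: "('v,'e) mpole \<Rightarrow> bool" where
  "subcubic M \<longleftrightarrow> (\<forall>z\<in>verts M. finite (ends_at M z) \<and> card (ends_at M z) \<le> 3)"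

lemma cubic_graph_imp_subcubic: "cubic_graph G \<Longrightarrow> subcubic G"
  by (auto simp: cubic_graph_def subcubic_def intro: card_ge_0_finite)

lemma subcubic_del_verts:
  assumes "subcubic M"
  shows "subcubic (del_verts M S)"
proof -
  have "verts (del_verts M S) = verts M - S" by (simp add: del_verts_def)
  then show ?thesis using assms by (simp add: subcubic_def ends_at_del_verts)
qed

lemma subcubic_del_edges:
  assumes "subcubic M"
  shows "subcubic (del_edges M F)"
  unfolding subcubic_def
proof
  fix z assume "z \<in> verts (del_edges M F)"
  then have "finite (ends_at M z)" "card (ends_at M z) \<le> 3"
    using assms by (auto simp: subcubic_def del_edges_def)
  moreover have "ends_at (del_edges M F) z \<subseteq> ends_at M z" by (auto simp: ends_at_del_edges)
  ultimately show "finite (ends_at (del_edges M F) z) \<and> card (ends_at (del_edges M F) z) \<le> 3"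
    by (meson card_mono finite_subset order_trans)
qed

lemma ends_at_edge_with_free_end:
  assumes "e \<in> edges M" "ends M (e, b) = None"
  shows "ends_at M z = (if ends M (e, \<not> b) = Some z
    then insert (e, \<not> b) (ends_at (del_edges M {e}) z) else ends_at (del_edges M {e}) z)"
proof -
  have other_end: "c = (\<not> b)" if "ends M (e, c) = Some z" for c z
    using that assms(2) by (cases c; cases b) auto
  have "ends_at M z = ends_at (del_edges M {e}) z \<union> {(e, c) | c. ends M (e, c) = Some z}"
    using assms(1) by (auto simp: ends_at_def del_edges_def)
  then show ?thesis
    by (auto dest: other_end)
qed

text \<open>An edge with a free end meets at most one vertex, where at most two other edge ends
  are present, so a third colour is always available for it.\<close>
lemma colouring_extend_edge:
  assumes col: "is_colouring (del_edges M {e}) \<phi>" and e: "e \<in> edges M"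
    and free: "ends M (e, b) = None" and sub: "subcubic M"
  shows "\<exists>c<3. is_colouring M (\<phi>(e := c))"
proof -
  let ?M' = "del_edges M {e}"
  let ?col = "\<lambda>\<psi> h. \<psi> (fst h)"
  have ends_at_M: "ends_at M z =
      (if ends M (e, \<not> b) = Some z then insert (e, \<not> b) (ends_at ?M' z) else ends_at ?M' z)" for z
    by (rule ends_at_edge_with_free_end[OF e free])
  have upd: "inj_on (?col (\<phi>(e := c))) (ends_at ?M' z) \<longleftrightarrow> inj_on (?col \<phi>) (ends_at ?M' z)"
    for c z
    by (rule inj_on_cong) (auto simp: ends_at_del_edges)
  have col': "\<forall>d\<in>edges M - {e}. \<phi> d < 3" "\<forall>z\<in>verts M. inj_on (?col \<phi>) (ends_at ?M' z)"
    using col by (auto simp: is_colouring_def del_edges_def)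
  obtain c where c: "c < 3"
    and avoid: "\<And>z. z \<in> verts M \<Longrightarrow> ends M (e, \<not> b) = Some z \<Longrightarrow>
      c \<notin> ?col \<phi> ` ends_at ?M' z"
  proof (cases "\<exists>z\<in>verts M. ends M (e, \<not> b) = Some z")
    case True
    then obtain z where z: "z \<in> verts M" "ends M (e, \<not> b) = Some z" by blast
    have "finite (ends_at M z)" "card (ends_at M z) \<le> 3" using sub z(1) by (auto simp: subcubic_def)
    moreover have "ends_at M z = insert (e, \<not> b) (ends_at ?M' z)" using ends_at_M[of z] z(2) by simp
    moreover have "(e, \<not> b) \<notin> ends_at ?M' z" by (simp add: ends_at_del_edges)
    ultimately have "finite (ends_at ?M' z)" "card (ends_at ?M' z) < 3" by auto
    then obtain c where "c < 3" "c \<notin> ?col \<phi> ` ends_at ?M' z"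
      using ex_less_three_notin[of "?col \<phi> ` ends_at ?M' z"] card_image_le le_less_trans by blast
    then show thesis using that z(2) by auto
  qed (use that[of 0] in auto)
  have "is_colouring M (\<phi>(e := c))"
    unfolding is_colouring_def
  proof (intro conjI ballI)
    fix d assume "d \<in> edges M" then show "(\<phi>(e := c)) d < 3" using c col' by auto
  next
    fix z assume z: "z \<in> verts M"
    have inj: "inj_on (?col (\<phi>(e := c))) (ends_at ?M' z)" using upd col' z by blast
    show "inj_on (?col (\<phi>(e := c))) (ends_at M z)"
    proof (cases "ends M (e, \<not> b) = Some z")
      case True
      have "(e, \<not> b) \<notin> ends_at ?M' z" by (simp add: ends_at_del_edges)
      moreover have "c \<notin> ?col (\<phi>(e := c)) ` ends_at ?M' z"
        using avoid[OF z True] by (auto simp: ends_at_del_edges)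
      ultimately show ?thesis using ends_at_M[of z] True inj by simp
    next
      case False
      then show ?thesis using ends_at_M[of z] inj by simp
    qed
  qed
  then show ?thesis using c by blast
qed

lemma colouring_extend_edges:
  assumes "finite F" "F \<subseteq> edges M" "\<forall>e\<in>F. \<exists>b. ends M (e, b) = None" "subcubic M"
    and "is_colouring (del_edges M F) \<phi>"
  shows "\<exists>\<psi>. is_colouring M \<psi> \<and> (\<forall>d. d \<notin> F \<longrightarrow> \<psi> d = \<phi> d)"
  using assms
proof (induction F arbitrary: \<phi> rule: finite_induct)
  case empty
  then show ?case by (auto simp: del_edges_def)
next
  case (insert e F)
  obtain b where free: "ends (del_edges M F) (e, b) = None"
    using insert.prems(2) by (auto simp: del_edges_def)
  have e: "e \<in> edges (del_edges M F)" using insert.hyps(2) insert.prems(1) by (simp add: del_edges_def)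
  have col: "is_colouring (del_edges (del_edges M F) {e}) \<phi>"
    using insert.prems(4) by (simp only: del_edges_del_edges_singleton)
  obtain c where col_c: "is_colouring (del_edges M F) (\<phi>(e := c))"
    using colouring_extend_edge[OF col e free subcubic_del_edges[OF insert.prems(3)]] by blast
  have "\<exists>\<psi>. is_colouring M \<psi> \<and> (\<forall>d. d \<notin> F \<longrightarrow> \<psi> d = (\<phi>(e := c)) d)"
    using insert.prems(1,2) by (intro insert.IH[OF _ _ insert.prems(3) col_c]) auto
  then show ?case by auto
qed

lemma suppress_eq:
  assumes "ends_at M z = {h1, h2}" "fst h1 \<noteq> fst h2"
  obtains k1 k2 where "{k1, k2} = {h1, h2}"
    "suppress M z = \<lparr>verts = verts M - {z}, edges = edges M - {fst k2},
       ends = (ends M)(k1 := ends M (fst k2, \<not> snd k2))\<rparr>"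
proof -
  define P where "P = (\<lambda>p. fst p \<noteq> snd p \<and> ends_at M z = {fst p, snd p})"
  have "P (h1, h2)" using assms by (auto simp: P_def)
  then have "P (SOME p. P p)" by (rule someI)
  moreover obtain k1 k2 where k: "(SOME p. P p) = (k1, k2)" by (cases "SOME p. P p") auto
  ultimately have "{k1, k2} = {h1, h2}" using assms(1) by (simp add: P_def)
  moreover have "fst k1 \<noteq> fst k2" using calculation assms(2) by (auto simp: doubleton_eq_iff)
  ultimately show thesis
    using that k unfolding suppress_def P_def[symmetric] by auto
qed

text \<open>The multipole coloured by \<chi> is suppress M z, see suppress_eq.\<close>
lemma is_colouring_unsuppress:
  assumes z: "ends_at M z = {h1, h2}" "fst h1 \<noteq> fst h2"
    and col: "is_colouring \<lparr>verts = verts M - {z}, edges = edges M - {fst h2},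
       ends = (ends M)(h1 := ends M (fst h2, \<not> snd h2))\<rparr> \<chi>" (is "is_colouring ?S \<chi>")
  shows "is_colouring (del_verts M {z}) (\<chi>(fst h2 := \<chi> (fst h1)))" (is "is_colouring _ ?\<psi>")
proof -
  obtain q t where h2: "h2 = (q, t)" by fastforce
  have "h1 \<in> ends_at M z" "(q, t) \<in> ends_at M z" using z(1) h2 by auto
  then have h1: "fst h1 \<in> edges M" "ends M h1 = Some z" and q: "q \<in> edges M" "ends M (q, t) = Some z"
    by (auto simp: ends_at_def)
  have col_S: "\<forall>d\<in>edges M - {q}. \<chi> d < 3"
    "\<forall>z'\<in>verts M - {z}. inj_on (\<lambda>h. \<chi> (fst h)) (ends_at ?S z')"
    using col h2 by (auto simp: is_colouring_def)
  show ?thesis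
    unfolding is_colouring_def
  proof (intro conjI ballI)
    fix d assume "d \<in> edges (del_verts M {z})"
    then show "?\<psi> d < 3" using col_S(1) h1(1) h2 z(2) by (auto simp: del_verts_def)
  next
    fix z' assume "z' \<in> verts (del_verts M {z})"
    then have z': "z' \<in> verts M - {z}" by (simp add: del_verts_def)
    define \<sigma> where "\<sigma> h = (if h = (q, \<not> t) then h1 else h)" for h
    have not_q: "fst h \<noteq> q" if "h \<in> ends_at M z'" "h \<noteq> (q, \<not> t)" for h
      using that q z' by (cases h) (auto simp: ends_at_def)
    have not_h1: "h \<noteq> h1" if "h \<in> ends_at M z'" for h
      using that h1 z' by (auto simp: ends_at_def)
    have inj_\<sigma>: "inj_on \<sigma> (ends_at M z')"
      using not_h1 by (auto simp: \<sigma>_def inj_on_def)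
    have "\<sigma> ` ends_at M z' \<subseteq> ends_at ?S z'"
      using not_q not_h1 h1(1) h2 z(2) by (auto simp: \<sigma>_def ends_at_def)
    then have "inj_on (\<lambda>h. \<chi> (fst h)) (\<sigma> ` ends_at M z')"
      using col_S(2) z' by (blast intro: inj_on_subset)
    with inj_\<sigma> have "inj_on ((\<lambda>h. \<chi> (fst h)) \<circ> \<sigma>) (ends_at M z')"
      by (rule comp_inj_on)
    moreover have "inj_on (\<lambda>h. ?\<psi> (fst h)) (ends_at M z') =
        inj_on ((\<lambda>h. \<chi> (fst h)) \<circ> \<sigma>) (ends_at M z')"
      using not_q h2 by (intro inj_on_cong) (auto simp: \<sigma>_def)
    ultimately show "inj_on (\<lambda>h. ?\<psi> (fst h)) (ends_at (del_verts M {z}) z')"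
      using z' by (simp add: ends_at_del_verts)
  qed
qed

lemma colouring_of_suppress:
  assumes "ends_at M z = {h1, h2}" "fst h1 \<noteq> fst h2" "colourable (suppress M z)"
  shows "\<exists>\<psi>. is_colouring (del_verts M {z}) \<psi> \<and> \<psi> (fst h1) = \<psi> (fst h2)"
proof -
  obtain k1 k2 where k: "{k1, k2} = {h1, h2}"
    and S: "suppress M z = \<lparr>verts = verts M - {z}, edges = edges M - {fst k2},
       ends = (ends M)(k1 := ends M (fst k2, \<not> snd k2))\<rparr>"
    using suppress_eq[OF assms(1,2)] by blast
  have k_z: "ends_at M z = {k1, k2}" "fst k1 \<noteq> fst k2"
    using k assms(1,2) by (auto simp: doubleton_eq_iff)
  obtain \<chi> where "is_colouring (suppress M z) \<chi>" using assms(3) by (auto simp: colourable_def)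
  then have "is_colouring (del_verts M {z}) (\<chi>(fst k2 := \<chi> (fst k1)))"
    using is_colouring_unsuppress[OF k_z] S by simp
  moreover have "{fst h1, fst h2} = {fst k1, fst k2}" using k by (auto simp: doubleton_eq_iff)
  ultimately show ?thesis
    using k_z(2) by (intro exI[of _ "\<chi>(fst k2 := \<chi> (fst k1))"]) (auto simp: doubleton_eq_iff)
qed

lemma dangling_edge_del_verts_other_edge:
  assumes "dangling_edge (del_verts M S) e" "ends M (e, b) = Some z" "z \<in> S"
    and "ends M (d, c) = Some z'" "z' \<in> S" "(d, c) \<noteq> (e, b)"
  shows "d \<noteq> e"
  using assms by (cases b; cases c) (auto simp: dangling_edge_def del_verts_def)

lemma colouring_restore_edges:
  assumes "cubic_graph G" "is_colouring (del_verts (del_edges G F) S) \<psi>"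
    and "finite F" "F \<subseteq> edges G" "\<forall>e\<in>F. \<exists>b. ends G (e, b) \<in> Some ` S"
  shows "\<exists>\<phi>. is_colouring (del_verts G S) \<phi> \<and> (\<forall>d. d \<notin> F \<longrightarrow> \<phi> d = \<psi> d)"
proof (rule colouring_extend_edges)
  show "\<forall>e\<in>F. \<exists>b. ends (del_verts G S) (e, b) = None"
  proof
    fix e assume "e \<in> F"
    then obtain b z where "ends G (e, b) = Some z" "z \<in> S" using assms(5) by blast
    then show "\<exists>b. ends (del_verts G S) (e, b) = None" by (intro exI[of _ b]) (simp add: del_verts_def)
  qed
  show "is_colouring (del_edges (del_verts G S) F) \<psi>"
    using assms(2) by (simp add: del_verts_del_edges)
  show "subcubic (del_verts G S)"
    using assms(1) by (intro subcubic_del_verts cubic_graph_imp_subcubic)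
qed (use assms(3,4) in \<open>simp_all add: del_verts_def\<close>)

lemma essential_pair_colouring_del_verts:
  assumes "cubic_graph G" "x \<in> verts G" "essential_pair G g f"
    and "ends G (g, b) = Some x" "ends G (f, c) = Some y"
    and "ends_at (del_edges G {g, f}) x = {(e', s), (f', t)}" "e' \<noteq> f'"
  shows "\<exists>\<phi>. is_colouring (del_verts G {x, y}) \<phi> \<and> \<phi> e' = \<phi> f'"
proof -
  have "card (ends_at (del_edges G {g, f}) x) = 2" using assms(6,7) by simp
  then have "colourable (suppress (del_edges G {g, f}) x)"
    using assms(2,3) by (simp add: essential_pair_def)
  moreover have "fst (e', s) \<noteq> fst (f', t)" using assms(7) by simp
  ultimately obtain \<psi> where \<psi>: "is_colouring (del_verts (del_edges G {g, f}) {x}) \<psi>" "\<psi> e' = \<psi> f'"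
    using colouring_of_suppress[OF assms(6)] by auto
  have "is_colouring (del_verts (del_edges G {g, f}) {x, y}) \<psi>"
    using is_colouring_del_verts[OF \<psi>(1), of "{y}"] by (simp add: del_verts_del_verts insert_commute)
  moreover have "{g, f} \<subseteq> edges G" using assms(3) by (simp add: essential_pair_def)
  moreover have "ends G (g, b) \<in> Some ` {x, y}" "ends G (f, c) \<in> Some ` {x, y}"
    using assms(4,5) by simp_all
  ultimately obtain \<phi> where \<phi>: "is_colouring (del_verts G {x, y}) \<phi>"
      "\<forall>d. d \<notin> {g, f} \<longrightarrow> \<phi> d = \<psi> d"
    using colouring_restore_edges[OF assms(1), of "{g, f}" "{x, y}" \<psi>] by blast
  have "(e', s) \<in> ends_at (del_edges G {g, f}) x" "(f', t) \<in> ends_at (del_edges G {g, f}) x"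
    using assms(6) by simp_all
  then have "e' \<notin> {g, f}" "f' \<notin> {g, f}" by (simp_all add: ends_at_del_edges)
  then show ?thesis using \<phi> \<psi>(2) by auto
qed

theorem lemma14:
  fixes G :: "('v,'e) mpole" and u w v x y :: 'v and e' f' :: 'e
  assumes "snark G"
    and "u \<in> verts G" "w \<in> verts G" "v \<in> verts G"
    and "u \<noteq> w" "w \<noteq> v" "u \<noteq> v"
    and "adjacent G u w" "adjacent G w v"
    and "x \<in> {u, v}"
    and "y \<in> verts (negator G u w v)"
    and "\<forall>e. incident G e x \<longrightarrow> (\<exists>f. incident G f y \<and> essential_pair G e f)"
    and "dangling_edge (del_verts G {x, y}) e'" "incident G e' x"
    and "dangling_edge (del_verts G {x, y}) f'" "incident G f' x"
    and "e' \<noteq> f'"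
  shows "\<exists>\<phi>. is_colouring (del_verts G {x, y}) \<phi> \<and> \<phi> e' = \<phi> f'"
proof -
  have cubic: "cubic_graph G" using assms(1) by (simp add: snark_def)
  have x: "x \<in> verts G" using assms(2,4,10) by auto
  \<comment> \<open>The path u w v matters only in that the negator has lost x, so y \<noteq> x.\<close>
  have y: "y \<noteq> x" using assms(10,11) by (auto simp: negator_def del_verts_def Let_def)
  obtain s t where s: "ends G (e', s) = Some x" and t: "ends G (f', t) = Some x"
    using assms(14,16) by (auto simp: incident_def)
  have "card (ends_at G x) = 3" "(e', s) \<in> ends_at G x" "(f', t) \<in> ends_at G x"
    using cubic x s t assms(14,16) by (auto simp: cubic_graph_def ends_at_def incident_def)
  then obtain h3 where ends_x: "ends_at G x = {(e', s), (f', t), h3}"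
    and h3: "h3 \<noteq> (e', s)" "h3 \<noteq> (f', t)"
    using card_3_obtain_third assms(17) by (metis prod.inject)
  obtain g b where gb: "h3 = (g, b)" by fastforce
  have "(g, b) \<in> ends_at G x" using ends_x gb by simp
  then have g: "ends G (g, b) = Some x" "g \<in> edges G" by (simp_all add: ends_at_def)
  have "g \<noteq> e'" by (rule dangling_edge_del_verts_other_edge[OF assms(13) s _ g(1)]) (use h3 gb in auto)
  have "g \<noteq> f'" by (rule dangling_edge_del_verts_other_edge[OF assms(15) t _ g(1)]) (use h3 gb in auto)
  obtain f c where f: "essential_pair G g f" "ends G (f, c) = Some y"
    using assms(12) g by (auto simp: incident_def)
  have fc: "(f, c) \<noteq> (e', s)" "(f, c) \<noteq> (f', t)" using f(2) s t y by (intro notI; simp)+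
  have "f \<noteq> e'" by (rule dangling_edge_del_verts_other_edge[OF assms(13) s _ f(2)]) (use fc in auto)
  have "f \<noteq> f'" by (rule dangling_edge_del_verts_other_edge[OF assms(15) t _ f(2)]) (use fc in auto)
  have "ends_at (del_edges G {g, f}) x = {(e', s), (f', t)}"
    using \<open>g \<noteq> e'\<close> \<open>g \<noteq> f'\<close> \<open>f \<noteq> e'\<close> \<open>f \<noteq> f'\<close> h3 gb
    by (auto simp: ends_at_del_edges ends_x)
  then show ?thesis by (rule essential_pair_colouring_del_verts[OF cubic x f(1) g(1) f(2) _ assms(17)])
qed

end
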